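(* Work in the real projective plane. Let $ABC$ be a triangle and let $\psi$ denote isogonal conjugation with respect to $ABC$. Let $l_1, l_2$ be two lines, and let $\mathcal{C}_1 = \psi(l_1)$, $\mathcal{C}_2 = \psi(l_2)$ be the circumconics of $ABC$ obtained as their images. Let $X, Y$ be two points on $l_1$ and put $X' = \psi(X)$, $Y' = \psi(Y)$. If $X$ and $Y$ are conjugate with respect to $\mathcal{C}_2$, then the line $X'Y'$ passes through the pole of $l_2$ with respect to $\mathcal{C}_1$.
   Context: Under isogonal conjugation with respect to a triangle, a line is transformed into a conic through the three vertices (a circumconic) and vice versa. Two points $U, V$ are conjugate with respect to a conic $\mathcal{C}$ if the polar of $U$ with respect to $\mathcal{C}$ passes through $V$ (equivalently, the polar of $V$ passes through $U$). *)

theory Defs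
  imports "HOL-Analysis.Analysis" "HOL-Analysis.Cross3"
begin

text \<open>Real projective plane: points and lines are nonzero vectors of real^3
(homogeneous coordinates), up to nonzero scalars.\<close>

definition hom :: "real^2 \<Rightarrow> real^3" where
  "hom p = vector [p$1, p$2, 1]"

definition proj_eq :: "real^3 \<Rightarrow> real^3 \<Rightarrow> bool" where
  "proj_eq P Q \<longleftrightarrow> P \<noteq> 0 \<and> Q \<noteq> 0 \<and> (\<exists>c::real. c \<noteq> 0 \<and> P = c *\<^sub>R Q)"

definition on_line :: "real^3 \<Rightarrow> real^3 \<Rightarrow> bool" where
  "on_line P l \<longleftrightarrow> P \<noteq> 0 \<and> l \<bullet> P = 0"

definition trimat :: "real^2 \<Rightarrow> real^2 \<Rightarrow> real^2 \<Rightarrow> real^3^3" where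
  "trimat A B C = transpose (vector [hom A, hom B, hom C])"

definition bary :: "real^2 \<Rightarrow> real^2 \<Rightarrow> real^2 \<Rightarrow> real^3 \<Rightarrow> real^3" where
  "bary A B C P = matrix_inv (trimat A B C) *v P"

text \<open>Isogonal conjugation: in barycentrics (x:y:z) \<mapsto> (a^2 y z : b^2 z x : c^2 x y).\<close>
definition isog :: "real^2 \<Rightarrow> real^2 \<Rightarrow> real^2 \<Rightarrow> real^3 \<Rightarrow> real^3" where
  "isog A B C P =
     (let w = bary A B C P in
      trimat A B C *v vector [ (dist B C)\<^sup>2 * (w$2) * (w$3),
                               (dist C A)\<^sup>2 * (w$3) * (w$1),
                               (dist A B)\<^sup>2 * (w$1) * (w$2) ])"

definition on_conic :: "real^3^3 \<Rightarrow> real^3 \<Rightarrow> bool" where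
  "on_conic M P \<longleftrightarrow> P \<noteq> 0 \<and> P \<bullet> (M *v P) = 0"

definition is_isog_image :: "real^2 \<Rightarrow> real^2 \<Rightarrow> real^2 \<Rightarrow> real^3 \<Rightarrow> real^3^3 \<Rightarrow> bool" where
  "is_isog_image A B C l M \<longleftrightarrow> transpose M = M \<and>
     (\<forall>P. on_conic M P \<longleftrightarrow> (\<exists>X. on_line X l \<and> proj_eq P (isog A B C X)))"

definition conjugate_wrt :: "real^3^3 \<Rightarrow> real^3 \<Rightarrow> real^3 \<Rightarrow> bool" where
  "conjugate_wrt M U V \<longleftrightarrow> V \<bullet> (M *v U) = 0"

definition is_pole :: "real^3^3 \<Rightarrow> real^3 \<Rightarrow> real^3 \<Rightarrow> bool" where
  "is_pole M P l \<longleftrightarrow> P \<noteq> 0 \<and> M *v P \<noteq> 0 \<and> proj_eq (M *v P) l"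

text \<open>P lies on the line through U and V (whose coordinates are U \<times> V).\<close>
definition on_join :: "real^3 \<Rightarrow> real^3 \<Rightarrow> real^3 \<Rightarrow> bool" where
  "on_join U V P \<longleftrightarrow> cross3 U V \<bullet> P = 0"

end

theory Submission
  imports Defs
begin

(* In barycentrics with respect to ABC, isogonal conjugation is psi (x:y:z) = (a y z : b z x : c x y)
   with a, b, c the squared side lengths, and the image of a line u missing the vertices is the
   circumconic with matrix K u; conversely, any symmetric matrix whose form vanishes on psi(u) is a
   multiple of K u.  As K is linear, the pole p of the line t with respect to K u satisfies
   K u p ~ t, so conjugacy of X and Y with respect to K t says y . K (K u p) x = 0.  For x, y on u a
   polynomial identity gives 2 det(psi x, psi y, p) u = (y . K (K u p) x) (x \<times> y), so psi x,
   psi y and p are collinear. *)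

lemma symmetric_matrix_entry:
  assumes "transpose N = N"
  shows "N$j$i = N$i$j"
  using arg_cong[OF assms, of "\<lambda>M. M$i$j"] by (simp add: transpose_def)

lemma symmetric_quadratic_form_3:
  fixes N :: "real^3^3"
  assumes "transpose N = N"
  shows "q \<bullet> (N *v q) = N$1$1 * (q$1)\<^sup>2 + N$2$2 * (q$2)\<^sup>2 + N$3$3 * (q$3)\<^sup>2
           + 2 * (N$1$2 * q$1 * q$2 + N$1$3 * q$1 * q$3 + N$2$3 * q$2 * q$3)"
  using symmetric_matrix_entry[OF assms]
  by (simp add: inner_vec_def sum_3 matrix_vector_mult_def power2_eq_square algebra_simps)

lemma matrix_inv_right: "invertible A \<Longrightarrow> A ** matrix_inv A = mat 1"
  and matrix_inv_left: "invertible A \<Longrightarrow> matrix_inv A ** A = mat 1"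
  unfolding invertible_def matrix_inv_def by (metis (mono_tags, lifting) someI_ex)+

lemma cross3_matrix_inner:
  "cross3 (T *v x) (T *v y) \<bullet> (T *v z) = det T * (cross3 x y \<bullet> z)"
proof -
  have "cross3 (T *v x) (T *v y) \<bullet> (T *v z) = (transpose T *v cross3 (T *v x) (T *v y)) \<bullet> z"
    by (simp add: dot_lmul_matrix)
  also have "\<dots> = det T * (cross3 x y \<bullet> z)"
    by (simp only: cross_matrix_mult inner_scaleR_left)
  finally show ?thesis .
qed

lemma collinear_0_real2:
  fixes d e :: "real^2"
  assumes "d$1 * e$2 = d$2 * e$1"
  shows "collinear {0, d, e}"
proof (cases "d = 0")
  case False
  then consider "d$1 \<noteq> 0" | "d$2 \<noteq> 0" by (auto simp: vec_eq_iff forall_2)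
  then have "e = (e$1 / d$1) *\<^sub>R d \<or> e = (e$2 / d$2) *\<^sub>R d"
    by cases (use assms in \<open>auto simp: vec_eq_iff forall_2 field_simps\<close>)
  then show ?thesis by (auto simp: collinear_lemma)
qed (simp add: collinear_lemma)

definition isog_bary :: "real \<Rightarrow> real \<Rightarrow> real \<Rightarrow> real^3 \<Rightarrow> real^3" where
  "isog_bary a b c w = vector [a * w$2 * w$3, b * w$3 * w$1, c * w$1 * w$2]"

(* The circumconic a u1 y z + b u2 z x + c u3 x y = 0, isogonal image of the line u. *)
definition circumconic_matrix :: "real \<Rightarrow> real \<Rightarrow> real \<Rightarrow> real^3 \<Rightarrow> real^3^3" where
  "circumconic_matrix a b c u =
     vector [vector [0, c * u$3, b * u$2], vector [c * u$3, 0, a * u$1], vector [b * u$2, a * u$1, 0]]"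

lemma isog_bary_0: "isog_bary a b c 0 = 0"
  by (simp add: isog_bary_def vec_eq_iff forall_3)

lemma circumconic_matrix_scaleR:
  "circumconic_matrix a b c (k *\<^sub>R u) = k *\<^sub>R circumconic_matrix a b c u"
  by (simp add: circumconic_matrix_def vec_eq_iff forall_3)

lemma symmetric_matrix_eq_circumconic_matrix:
  fixes N :: "real^3^3"
  assumes sym: "transpose N = N" and abc: "a \<noteq> 0" "b \<noteq> 0" "c \<noteq> 0"
    and u: "u$1 \<noteq> 0" "u$2 \<noteq> 0" "u$3 \<noteq> 0"
    and vanish: "\<And>w. u \<bullet> w = 0 \<Longrightarrow> isog_bary a b c w \<bullet> (N *v isog_bary a b c w) = 0"
  shows "\<exists>\<mu>. N = \<mu> *\<^sub>R circumconic_matrix a b c u"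
proof -
  obtain u1 u2 u3 where u123: "u$1 = u1" "u$2 = u2" "u$3 = u3" by blast
  note u' = u[unfolded u123]
  have form: "N$1$1 * (a*w1*w2)\<^sup>2 + N$2$2 * (b*w2*w0)\<^sup>2 + N$3$3 * (c*w0*w1)\<^sup>2
      + 2 * (N$1$2 * (a*w1*w2) * (b*w2*w0) + N$1$3 * (a*w1*w2) * (c*w0*w1)
             + N$2$3 * (b*w2*w0) * (c*w0*w1)) = 0"
    if "u1 * w0 + u2 * w1 + u3 * w2 = 0" for w0 w1 w2
  proof -
    have "u \<bullet> vector [w0, w1, w2] = 0" using that by (simp add: u123 inner_vec_def sum_3)
    from vanish[OF this] show ?thesis
      by (simp add: symmetric_quadratic_form_3[OF sym] isog_bary_def)
  qed
  \<comment> \<open>The points of u on the sides are mapped to the vertices; two further points of u fix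
     the ratios of the off-diagonal entries.\<close>
  have "N$1$1 = 0" using form[of 0 u3 "-u2"] u' abc by simp
  moreover have "N$2$2 = 0" using form[of u3 0 "-u1"] u' abc by simp
  moreover have "N$3$3 = 0" using form[of u2 "-u1" 0] u' abc by simp
  moreover have "N$1$2 * (a*b*u1*u2) = N$1$3 * (a*c*u1*u3)"
    and "N$2$3 * (b*c*u2*u3) = N$1$3 * (a*c*u1*u3)"
  proof -
    define X where "X = N$1$2 * (a*b*u1*u2)"
    define Y where "Y = N$1$3 * (a*c*u1*u3)"
    define Z where "Z = N$2$3 * (b*c*u2*u3)"
    have "(u1*u2*u3)\<^sup>2 * (2*X - Y - Z) = 0"
      using form[of "u2*u3" "u1*u3" "-2*u1*u2"] \<open>N$1$1 = 0\<close> \<open>N$2$2 = 0\<close> \<open>N$3$3 = 0\<close>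
      unfolding X_def Y_def Z_def by simp algebra
    moreover have "(u1*u2*u3)\<^sup>2 * (2*Z - X - Y) = 0"
      using form[of "-2*u2*u3" "u1*u3" "u1*u2"] \<open>N$1$1 = 0\<close> \<open>N$2$2 = 0\<close> \<open>N$3$3 = 0\<close>
      unfolding X_def Y_def Z_def by simp algebra
    ultimately have "2*X - Y - Z = 0" "2*Z - X - Y = 0" using u' by simp_all
    then show "X = Y" "Z = Y" by linarith+
  qed
  ultimately have "N = (N$1$3 / (b*u2)) *\<^sub>R circumconic_matrix a b c u"
    using symmetric_matrix_entry[OF sym] u' abc
    by (simp add: vec_eq_iff forall_3 circumconic_matrix_def u123 field_simps)
  then show ?thesis ..
qed

lemma cross_isog_bary_eq:
  assumes "u \<bullet> x = 0" "u \<bullet> y = 0"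
  shows "(2 * (cross3 (isog_bary a b c x) (isog_bary a b c y) \<bullet> p)) *\<^sub>R u
       = (y \<bullet> (circumconic_matrix a b c (circumconic_matrix a b c u *v p) *v x)) *\<^sub>R cross3 x y"
  using assms
  by (simp add: vec_eq_iff forall_3 cross3_simps isog_bary_def circumconic_matrix_def
      matrix_vector_mult_def) (intro conjI; algebra)

lemma isog_bary_collinear_if_conjugate:
  assumes "u \<noteq> 0" "u \<bullet> x = 0" "u \<bullet> y = 0"
    and "circumconic_matrix a b c u *v p = k *\<^sub>R t"
    and "y \<bullet> (circumconic_matrix a b c t *v x) = 0"
  shows "cross3 (isog_bary a b c x) (isog_bary a b c y) \<bullet> p = 0"
  using cross_isog_bary_eq[OF assms(2,3), of a b c p] assms(1,4,5)
  by (simp add: circumconic_matrix_scaleR flip: scaleR_matrix_vector_assoc)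

lemma det_trimat: "det (trimat A B C) = (B$1 - A$1) * (C$2 - A$2) - (B$2 - A$2) * (C$1 - A$1)"
  by (simp add: trimat_def det_3 transpose_def hom_def algebra_simps)

lemma invertible_trimat:
  assumes "\<not> collinear {A, B, C}"
  shows "invertible (trimat A B C)"
proof -
  have "det (trimat A B C) \<noteq> 0"
  proof
    assume "det (trimat A B C) = 0"
    then have "collinear {0, B - A, C - A}"
      by (intro collinear_0_real2) (simp add: det_trimat algebra_simps)
    then show False
      using assms collinear_3[of B A C] by (simp add: insert_commute)
  qed
  then show ?thesis by (simp add: invertible_det_nz)
qed

lemma trimat_bary: "\<not> collinear {A, B, C} \<Longrightarrow> trimat A B C *v bary A B C P = P"
  by (simp add: bary_def matrix_vector_mul_assoc matrix_inv_right invertible_trimat)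

lemma bary_trimat: "\<not> collinear {A, B, C} \<Longrightarrow> bary A B C (trimat A B C *v w) = w"
  by (simp add: bary_def matrix_vector_mul_assoc matrix_inv_left invertible_trimat)

lemma trimat_eq_0_iff: "\<not> collinear {A, B, C} \<Longrightarrow> trimat A B C *v w = 0 \<longleftrightarrow> w = 0"
  by (metis bary_trimat matrix_vector_mult_0_right)

lemma isog_eq_isog_bary:
  "isog A B C P =
     trimat A B C *v isog_bary ((dist B C)\<^sup>2) ((dist C A)\<^sup>2) ((dist A B)\<^sup>2) (bary A B C P)"
  by (simp add: isog_def isog_bary_def Let_def)

definition line_bary :: "real^2 \<Rightarrow> real^2 \<Rightarrow> real^2 \<Rightarrow> real^3 \<Rightarrow> real^3" where
  "line_bary A B C l = transpose (trimat A B C) *v l"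

definition conic_bary :: "real^2 \<Rightarrow> real^2 \<Rightarrow> real^2 \<Rightarrow> real^3^3 \<Rightarrow> real^3^3" where
  "conic_bary A B C M = transpose (trimat A B C) ** M ** trimat A B C"

lemma line_bary_eq: "line_bary A B C l = vector [l \<bullet> hom A, l \<bullet> hom B, l \<bullet> hom C]"
  by (simp add: line_bary_def trimat_def vec_eq_iff forall_3 matrix_vector_mult_def transpose_def
      inner_vec_def sum_3 hom_def mult.commute)

lemma line_bary_nth_nonzero:
  assumes "\<not> on_line (hom A) l" "\<not> on_line (hom B) l" "\<not> on_line (hom C) l"
  shows "(line_bary A B C l)$i \<noteq> 0"
proof -
  have "hom P \<noteq> 0" for P by (simp add: hom_def vec_eq_iff forall_3)
  then show ?thesis
    using assms exhaust_3[of i] by (auto simp: line_bary_eq on_line_def inner_commute)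
qed

lemma inner_trimat: "l \<bullet> (trimat A B C *v w) = line_bary A B C l \<bullet> w"
  by (simp add: line_bary_def dot_lmul_matrix[symmetric])

lemma inner_conic_trimat:
  "(trimat A B C *v x) \<bullet> (M *v (trimat A B C *v y)) = x \<bullet> (conic_bary A B C M *v y)"
proof -
  have "(trimat A B C *v x) \<bullet> (M *v (trimat A B C *v y))
      = line_bary A B C (M *v (trimat A B C *v y)) \<bullet> x"
    by (metis inner_commute inner_trimat)
  then show ?thesis
    by (simp add: conic_bary_def line_bary_def matrix_vector_mul_assoc matrix_mul_assoc inner_commute)
qed

lemma conic_bary_mult_bary:
  "\<not> collinear {A, B, C} \<Longrightarrow> conic_bary A B C M *v bary A B C P = line_bary A B C (M *v P)"
  by (simp add: conic_bary_def line_bary_def matrix_vector_mul_assoc[symmetric] trimat_bary)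

lemma conjugate_wrt_bary:
  "\<not> collinear {A, B, C} \<Longrightarrow>
     conjugate_wrt M X Y \<longleftrightarrow> bary A B C Y \<bullet> (conic_bary A B C M *v bary A B C X) = 0"
  by (simp add: conjugate_wrt_def trimat_bary flip: inner_conic_trimat)

lemma symmetric_conic_bary:
  "transpose M = M \<Longrightarrow> transpose (conic_bary A B C M) = conic_bary A B C M"
  by (simp add: conic_bary_def matrix_transpose_mul matrix_mul_assoc)

lemma isog_image_form_vanishes:
  assumes tri: "\<not> collinear {A, B, C}" and img: "is_isog_image A B C l M"
    and w: "line_bary A B C l \<bullet> w = 0"
  defines "q \<equiv> isog_bary ((dist B C)\<^sup>2) ((dist C A)\<^sup>2) ((dist A B)\<^sup>2) w"
  shows "q \<bullet> (conic_bary A B C M *v q) = 0"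
proof (cases "q = 0")
  case False
  define X where "X = trimat A B C *v w"
  have "w \<noteq> 0" using False isog_bary_0 by (auto simp: q_def)
  then have "on_line X l"
    using w by (simp add: on_line_def X_def inner_trimat trimat_eq_0_iff[OF tri])
  moreover have "proj_eq (trimat A B C *v q) (isog A B C X)"
    using False by (auto simp: proj_eq_def X_def q_def isog_eq_isog_bary bary_trimat[OF tri]
        trimat_eq_0_iff[OF tri] intro: exI[of _ 1])
  ultimately have "on_conic M (trimat A B C *v q)" using img by (auto simp: is_isog_image_def)
  then show ?thesis by (simp add: on_conic_def inner_conic_trimat)
qed simp

(* No point psi(X) has barycentrics (1:1:0), while the conic of a zero matrix would contain it. *)
lemma isog_image_conic_bary_nonzero:
  assumes tri: "\<not> collinear {A, B, C}" and img: "is_isog_image A B C l M"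
  shows "conic_bary A B C M \<noteq> 0"
proof
  assume zero: "conic_bary A B C M = 0"
  define e :: "real^3" where "e = vector [1, 1, 0]"
  have "e \<noteq> 0" by (simp add: e_def vec_eq_iff forall_3)
  then have "on_conic M (trimat A B C *v e)"
    by (simp add: on_conic_def inner_conic_trimat zero trimat_eq_0_iff[OF tri])
  then obtain X k where "trimat A B C *v e = k *\<^sub>R isog A B C X"
    using img by (auto simp: is_isog_image_def proj_eq_def)
  then have "e = k *\<^sub>R isog_bary ((dist B C)\<^sup>2) ((dist C A)\<^sup>2) ((dist A B)\<^sup>2) (bary A B C X)"
    by (metis bary_trimat[OF tri] isog_eq_isog_bary matrix_vector_mult_scaleR)
  moreover have "A \<noteq> B" using tri by auto
  ultimately show False by (auto simp: e_def isog_bary_def vec_eq_iff forall_3)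
qed

lemma isog_image_conic_bary:
  assumes tri: "\<not> collinear {A, B, C}"
    and vert: "\<not> on_line (hom A) l" "\<not> on_line (hom B) l" "\<not> on_line (hom C) l"
    and img: "is_isog_image A B C l M"
  obtains \<mu> where "\<mu> \<noteq> 0" and "conic_bary A B C M =
    \<mu> *\<^sub>R circumconic_matrix ((dist B C)\<^sup>2) ((dist C A)\<^sup>2) ((dist A B)\<^sup>2) (line_bary A B C l)"
proof -
  have "(line_bary A B C l)$1 \<noteq> 0" "(line_bary A B C l)$2 \<noteq> 0" "(line_bary A B C l)$3 \<noteq> 0"
    using line_bary_nth_nonzero[OF vert] by auto
  moreover have "(dist B C)\<^sup>2 \<noteq> 0" "(dist C A)\<^sup>2 \<noteq> 0" "(dist A B)\<^sup>2 \<noteq> 0"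
    using tri by (auto simp: insert_commute)
  moreover have "transpose (conic_bary A B C M) = conic_bary A B C M"
    using img by (simp add: is_isog_image_def symmetric_conic_bary)
  ultimately obtain \<mu> where "conic_bary A B C M =
      \<mu> *\<^sub>R circumconic_matrix ((dist B C)\<^sup>2) ((dist C A)\<^sup>2) ((dist A B)\<^sup>2) (line_bary A B C l)"
    using symmetric_matrix_eq_circumconic_matrix isog_image_form_vanishes[OF tri img] by metis
  moreover have "\<mu> \<noteq> 0" using calculation isog_image_conic_bary_nonzero[OF tri img] by auto
  ultimately show ?thesis using that by blast
qed

theorem proposition3p3:
  fixes A B C :: "real^2" and l1 l2 X Y :: "real^3" and M1 M2 :: "real^3^3"
  assumes tri: "\<not> collinear {A, B, C}"
    and l1: "l1 \<noteq> 0" and l2: "l2 \<noteq> 0"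
    and l1_vert: "\<not> on_line (hom A) l1" "\<not> on_line (hom B) l1" "\<not> on_line (hom C) l1"
    and l2_vert: "\<not> on_line (hom A) l2" "\<not> on_line (hom B) l2" "\<not> on_line (hom C) l2"
    and C1: "is_isog_image A B C l1 M1"
    and C2: "is_isog_image A B C l2 M2"
    and X: "on_line X l1" and Y: "on_line Y l1"
    and conj: "conjugate_wrt M2 X Y"
  shows "\<forall>P. is_pole M1 P l2 \<longrightarrow> on_join (isog A B C X) (isog A B C Y) P"
proof (intro allI impI)
  fix P assume "is_pole M1 P l2"
  then obtain k where pole: "M1 *v P = k *\<^sub>R l2" by (auto simp: is_pole_def proj_eq_def)
  let ?K = "circumconic_matrix ((dist B C)\<^sup>2) ((dist C A)\<^sup>2) ((dist A B)\<^sup>2)"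
  define u t x y p where "u = line_bary A B C l1" and "t = line_bary A B C l2"
    and "x = bary A B C X" and "y = bary A B C Y" and "p = bary A B C P"
  obtain \<mu>1 where "\<mu>1 \<noteq> 0" and M1: "conic_bary A B C M1 = \<mu>1 *\<^sub>R ?K u"
    using isog_image_conic_bary[OF tri l1_vert C1] u_def by blast
  obtain \<mu>2 where "\<mu>2 \<noteq> 0" and M2: "conic_bary A B C M2 = \<mu>2 *\<^sub>R ?K t"
    using isog_image_conic_bary[OF tri l2_vert C2] t_def by blast
  have "u \<noteq> 0" using line_bary_nth_nonzero[OF l1_vert] by (auto simp: u_def)
  moreover have "u \<bullet> x = 0" "u \<bullet> y = 0"
    using X Y by (simp_all add: u_def x_def y_def on_line_def trimat_bary[OF tri] flip: inner_trimat)
  moreover have "?K u *v p = (k / \<mu>1) *\<^sub>R t"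
    using \<open>\<mu>1 \<noteq> 0\<close> conic_bary_mult_bary[OF tri, of M1 P]
    by (simp add: M1 pole p_def t_def line_bary_def eq_vector_fraction_iff
        matrix_vector_mult_scaleR flip: scaleR_matrix_vector_assoc)
  moreover have "y \<bullet> (?K t *v x) = 0"
    using conj \<open>\<mu>2 \<noteq> 0\<close>
    by (simp add: conjugate_wrt_bary[OF tri] M2 x_def y_def flip: scaleR_matrix_vector_assoc)
  ultimately have "cross3 (isog_bary ((dist B C)\<^sup>2) ((dist C A)\<^sup>2) ((dist A B)\<^sup>2) x)
      (isog_bary ((dist B C)\<^sup>2) ((dist C A)\<^sup>2) ((dist A B)\<^sup>2) y) \<bullet> p = 0"
    by (rule isog_bary_collinear_if_conjugate)
  then have "on_join (isog A B C X) (isog A B C Y) (trimat A B C *v p)"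
    by (simp add: on_join_def isog_eq_isog_bary x_def y_def cross3_matrix_inner)
  then show "on_join (isog A B C X) (isog A B C Y) P"
    by (simp add: p_def trimat_bary[OF tri])
qed

end
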